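(* Let $I$ be a nonempty open real interval and let $(f,g)\in\mathscr{B}_0(I)$. Consider the statements: (i) There exists a continuous strictly monotone function $h:I\to\mathbb{R}$ such that \[ \Big(\frac{g}{f}\Big)^{-1}\!\left(\frac{g(x)+g(y)}{f(x)+f(y)}\right)=h^{-1}\Big(\frac{h(x)+h(y)}{2}\Big)\qquad\text{for all } x,y\in I. \tag{$*$} \] (ii) There exist real constants $\alpha,\beta,\gamma$ such that $\alpha f^2+\beta fg+\gamma g^2=1$ on $I$. (iii) (Applicable when $(f,g)\in\mathscr{B}_1(I)$.) Equation $( * )$ holds with $h$ being a primitive function of $W^{1,0}_{f,g}$. (iv) (Applicable when $(f,g)\in\mathscr{B}_2(I)$.) There exists a real constant $\delta$ such that $W^{2,1}_{f,g}=\delta\,(W^{1,0}_{f,g})^3$ on $I$. (v) (Applicable when $(f,g)\in\mathscr{B}_2(I)$.) $\Psi_{f,g}$ is differentiable and $\Psi'_{f,g}=2\Phi_{f,g}\Psi_{f,g}$ on $I$. Then (i) and (ii) are equivalent; if in addition $(f,g)\in\mathscr{B}_1(I)$, then (i), (ii), (iii) are equivalent; and if in addition $(f,g)\in\mathscr{B}_2(I)$, then (i)–(v) are all equivalent.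
   Context: $\mathscr{B}_0(I)$ is the class of pairs $(f,g)$ of functions $I\to\mathbb{R}$ such that $f$ is everywhere positive on $I$ and $g/f$ is strictly monotone and continuous on $I$. For $n\geq1$, $\mathscr{B}_n(I)$ is the class of pairs $(f,g)$ such that $f$ is everywhere positive on $I$, $f,g$ are $n$ times continuously differentiable on $I$, and $(g/f)'$ is nowhere zero on $I$. For such pairs and $i,j\in\{0,\dots,n\}$, $W^{i,j}_{f,g}:=f^{(i)}g^{(j)}-f^{(j)}g^{(i)}$ (the determinant with first row $f^{(i)},f^{(j)}$ and second row $g^{(i)},g^{(j)}$), and $\Phi_{f,g}:=W^{2,0}_{f,g}/W^{1,0}_{f,g}$, $\Psi_{f,g}:=-W^{2,1}_{f,g}/W^{1,0}_{f,g}$. *)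

theory Defs
  imports "HOL-Analysis.Analysis"
begin

definition strictly_monotone_on :: "real set \<Rightarrow> (real \<Rightarrow> real) \<Rightarrow> bool" where
  "strictly_monotone_on I \<phi> \<longleftrightarrow> strict_mono_on I \<phi> \<or> strict_antimono_on I \<phi>"

definition nderiv :: "nat \<Rightarrow> (real \<Rightarrow> real) \<Rightarrow> real \<Rightarrow> real" where
  "nderiv k f = (deriv ^^ k) f"

definition C_n_on :: "nat \<Rightarrow> real set \<Rightarrow> (real \<Rightarrow> real) \<Rightarrow> bool" where
  "C_n_on n I f \<longleftrightarrow>
     (\<forall>k<n. \<forall>x\<in>I. nderiv k f differentiable (at x)) \<and>
     (\<forall>k\<le>n. continuous_on I (nderiv k f))"

definition B0 :: "real set \<Rightarrow> (real \<Rightarrow> real) \<Rightarrow> (real \<Rightarrow> real) \<Rightarrow> bool" where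
  "B0 I f g \<longleftrightarrow> (\<forall>x\<in>I. f x > 0) \<and>
     strictly_monotone_on I (\<lambda>x. g x / f x) \<and> continuous_on I (\<lambda>x. g x / f x)"

definition Bn :: "nat \<Rightarrow> real set \<Rightarrow> (real \<Rightarrow> real) \<Rightarrow> (real \<Rightarrow> real) \<Rightarrow> bool" where
  "Bn n I f g \<longleftrightarrow> (\<forall>x\<in>I. f x > 0) \<and> C_n_on n I f \<and> C_n_on n I g \<and>
     (\<forall>x\<in>I. deriv (\<lambda>t. g t / f t) x \<noteq> 0)"

definition W :: "nat \<Rightarrow> nat \<Rightarrow> (real \<Rightarrow> real) \<Rightarrow> (real \<Rightarrow> real) \<Rightarrow> real \<Rightarrow> real" where
  "W i j f g x = nderiv i f x * nderiv j g x - nderiv j f x * nderiv i g x"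

definition Phi :: "(real \<Rightarrow> real) \<Rightarrow> (real \<Rightarrow> real) \<Rightarrow> real \<Rightarrow> real" where
  "Phi f g x = W 2 0 f g x / W 1 0 f g x"

definition Psi :: "(real \<Rightarrow> real) \<Rightarrow> (real \<Rightarrow> real) \<Rightarrow> real \<Rightarrow> real" where
  "Psi f g x = - W 2 1 f g x / W 1 0 f g x"

definition eq_star :: "real set \<Rightarrow> (real \<Rightarrow> real) \<Rightarrow> (real \<Rightarrow> real) \<Rightarrow> (real \<Rightarrow> real) \<Rightarrow> bool" where
  "eq_star I f g h \<longleftrightarrow> (\<forall>x\<in>I. \<forall>y\<in>I.
     the_inv_into I (\<lambda>t. g t / f t) ((g x + g y) / (f x + f y)) =
     the_inv_into I h ((h x + h y) / 2))"

end

theory Submission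
  imports Defs
begin

text \<open>
  (ii) \<Rightarrow> (i), (iii): on the conic, \<open>f = 1/\<surd>q(u)\<close> and \<open>g = u/\<surd>q(u)\<close> with \<open>u = g/f\<close> and
  \<open>q(s) = \<alpha> + \<beta> s + \<gamma> s\<^sup>2\<close>, so the mean in \<open>(*)\<close> is the mean of \<open>u x\<close> and \<open>u y\<close> with weights
  \<open>\<surd>q(u y)\<close> and \<open>\<surd>q(u x)\<close>. A primitive \<open>H\<close> of \<open>1/q\<close> turns this weighted mean into the arithmetic
  mean, so \<open>h = H \<circ> u\<close> solves \<open>(*)\<close>, and so does every primitive of \<open>W\<^sup>1\<^sup>,\<^sup>0 = -(H \<circ> u)'\<close>.

  (i) \<Rightarrow> (ii): in the coordinate \<open>p = h x\<close> the curve \<open>v = (f, g) \<circ> h\<^sup>-\<^sup>1\<close> satisfies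
  \<open>v((p + r)/2) \<parallel> v(p) + v(r)\<close>. Along an arithmetic progression this forces a linear recurrence
  \<open>v\<^sub>i\<^sub>+\<^sub>2 = m v\<^sub>i\<^sub>+\<^sub>1 - v\<^sub>i\<close> with constant \<open>m\<close>, whose solutions lie on a central conic. Dyadic
  refinements of a progression keep three of its points and hence the conic; the midpoint equation
  also makes \<open>v\<close> continuous, so the conic contains all of \<open>v\<close>.

  (ii) \<Leftrightarrow> (iv) \<Leftrightarrow> (v): differentiating the conic twice gives
  \<open>W\<^sup>2\<^sup>,\<^sup>1 = (\<alpha>\<gamma> - \<beta>\<^sup>2/4) (W\<^sup>1\<^sup>,\<^sup>0)\<^sup>3\<close>; conversely, the third-order equation (iv) has a first integral
  which is a quadratic form in \<open>(f, g)\<close>. Finally (iv) says \<open>\<Psi> = -\<delta> (W\<^sup>1\<^sup>,\<^sup>0)\<^sup>2\<close> and (v) says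
  \<open>(\<Psi> / (W\<^sup>1\<^sup>,\<^sup>0)\<^sup>2)' = 0\<close>, using \<open>(W\<^sup>1\<^sup>,\<^sup>0)' = W\<^sup>2\<^sup>,\<^sup>0\<close>.
\<close>

section \<open>Real functions on intervals\<close>

lemma strictly_monotone_on_imp_inj_on:
  "strictly_monotone_on I \<phi> \<Longrightarrow> inj_on \<phi> I"
  unfolding strictly_monotone_on_def
  using strict_mono_on_imp_inj_on strict_antimono_iff_antimono by blast

lemma strictly_monotone_on_compose:
  assumes "strictly_monotone_on I u" and H: "strict_mono_on (u ` I) H"
  shows "strictly_monotone_on I (\<lambda>x. H (u x))"
proof -
  have "H (u r) < H (u s)" if "r \<in> I" "s \<in> I" "u r < u s" for r s
    using strict_mono_onD[OF H] that by blast
  then show ?thesis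
    using assms(1) unfolding strictly_monotone_on_def monotone_on_def by blast
qed

lemma is_interval_continuous_image:
  fixes \<phi> :: "real \<Rightarrow> real"
  assumes "continuous_on I \<phi>" "is_interval I"
  shows "is_interval (\<phi> ` I)"
  using assms connected_continuous_image is_interval_connected_1 by blast

lemma in_image_if_between:
  fixes \<phi> :: "real \<Rightarrow> real"
  assumes "continuous_on I \<phi>" "is_interval I" "x \<in> I" "y \<in> I"
    and "min (\<phi> x) (\<phi> y) \<le> c" "c \<le> max (\<phi> x) (\<phi> y)"
  shows "c \<in> \<phi> ` I"
proof -
  have "min (\<phi> x) (\<phi> y) \<in> \<phi> ` I" "max (\<phi> x) (\<phi> y) \<in> \<phi> ` I"
    using assms(3,4) by (auto simp: min_def max_def)
  then show ?thesis
    using mem_is_interval_1_I[OF is_interval_continuous_image[OF assms(1,2)]] assms(5,6) by blast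
qed

lemma continuous_nonzero_sign_cases:
  fixes \<phi> :: "real \<Rightarrow> real"
  assumes "is_interval I" "continuous_on I \<phi>" "\<And>x. x \<in> I \<Longrightarrow> \<phi> x \<noteq> 0"
  shows "(\<forall>x\<in>I. \<phi> x > 0) \<or> (\<forall>x\<in>I. \<phi> x < 0)"
proof (rule ccontr)
  assume "\<not> ?thesis"
  then obtain x y where xy: "x \<in> I" "y \<in> I" "\<phi> x \<ge> 0" "\<phi> y \<le> 0"
    by (meson not_less)
  then have "min (\<phi> x) (\<phi> y) \<le> 0" "0 \<le> max (\<phi> x) (\<phi> y)" by auto
  then have "0 \<in> \<phi> ` I" using in_image_if_between[OF assms(2,1) xy(1,2)] by blast
  then show False using assms(3) by force
qed

lemma strict_mono_on_if_deriv_pos: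
  assumes "is_interval I"
    and "\<And>x. x \<in> I \<Longrightarrow> (h has_real_derivative h' x) (at x) \<and> h' x > 0"
  shows "strict_mono_on I h"
proof (rule strict_mono_onI)
  fix r s assume rs: "r \<in> I" "s \<in> I" "r < s"
  show "h r < h s"
  proof (rule DERIV_pos_imp_increasing[OF rs(3)])
    fix x assume "r \<le> x" "x \<le> s"
    then have "x \<in> I" using mem_is_interval_1_I[OF assms(1) rs(1,2)] by blast
    then show "\<exists>y. DERIV h x :> y \<and> y > 0" using assms(2) by blast
  qed
qed

lemma strictly_monotone_on_if_deriv_nonzero:
  assumes "is_interval I" "continuous_on I h'"
    and "\<And>x. x \<in> I \<Longrightarrow> (h has_real_derivative h' x) (at x)" "\<And>x. x \<in> I \<Longrightarrow> h' x \<noteq> 0"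
  shows "strictly_monotone_on I h"
  using continuous_nonzero_sign_cases[OF assms(1,2,4)]
proof
  assume "\<forall>x\<in>I. h' x > 0"
  then have "strict_mono_on I h"
    using strict_mono_on_if_deriv_pos[OF assms(1)] assms(3) by blast
  then show ?thesis by (simp add: strictly_monotone_on_def)
next
  assume "\<forall>x\<in>I. h' x < 0"
  then have "strict_mono_on I (\<lambda>x. - h x)"
    using assms(3) by (intro strict_mono_on_if_deriv_pos[OF assms(1), of _ "\<lambda>x. - h' x"]) (simp add: DERIV_minus)
  then show ?thesis by (simp add: strictly_monotone_on_def monotone_on_def)
qed

lemma constant_on_interval_if_deriv_zero:
  assumes "is_interval I" "\<And>x. x \<in> I \<Longrightarrow> (\<phi> has_real_derivative 0) (at x)"
    and "x \<in> I" "y \<in> I"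
  shows "\<phi> x = \<phi> y"
proof -
  have "\<exists>c. \<forall>x\<in>I. \<phi> x = c"
    by (rule has_field_derivative_zero_constant)
       (use is_interval_convex[OF assms(1)] assms(2) has_field_derivative_at_within in blast)+
  then show ?thesis using assms(3,4) by metis
qed

lemma deriv_zero_if_constant_on_open:
  assumes "open I" "x \<in> I" "(\<phi> has_real_derivative D) (at x)" "\<And>y. y \<in> I \<Longrightarrow> \<phi> y = c"
  shows "D = 0"
proof -
  have "(\<phi> has_real_derivative 0) (at x)"
    by (rule has_field_derivative_transform_within_open[OF DERIV_const assms(1,2)])
       (use assms(4) in simp)
  then show ?thesis using DERIV_unique assms(3) by blast
qed

lemma exists_antiderivative_on_open_interval:
  fixes F :: "real \<Rightarrow> real"
  assumes "open U" "is_interval U" "U \<noteq> {}" "continuous_on U F"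
  obtains H where "\<And>x. x \<in> U \<Longrightarrow> (H has_real_derivative F x) (at x)"
proof -
  obtain c where "c \<in> U" using assms(3) by blast
  define H where "H t = (if c \<le> t then integral {c..t} F else - integral {t..c} F)" for t
  have "(H has_real_derivative F x) (at x)" if "x \<in> U" for x
  proof -
    obtain d where d: "d > 0" "ball x d \<subseteq> U" using assms(1) \<open>x \<in> U\<close> open_contains_ball by blast
    define a where "a = min c (x - d/2)"
    define b where "b = max c (x + d/2)"
    have "x - d/2 \<in> U" "x + d/2 \<in> U" using d by (auto simp: dist_real_def subset_iff)
    then have "a \<in> U" "b \<in> U" using \<open>c \<in> U\<close> by (simp_all add: a_def b_def min_def max_def)
    then have cont: "continuous_on {a..b} F"
      using continuous_on_subset[OF assms(4)] mem_is_interval_1_I[OF assms(2)] by (meson atLeastAtMost_iff subsetI)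
    have ac: "a \<le> c" "c \<le> b" unfolding a_def b_def by auto
    have int: "F integrable_on {s..t}" if "a \<le> s" "t \<le> b" for s t
      by (intro integrable_continuous_real continuous_on_subset[OF cont]) (use that in auto)
    have H_eq: "H t = integral {a..t} F - integral {a..c} F" if "t \<in> {a..b}" for t
    proof (cases "c \<le> t")
      case True
      have "integral {a..c} F + integral {c..t} F = integral {a..t} F"
        by (rule Henstock_Kurzweil_Integration.integral_combine) (use True ac that int in auto)
      then show ?thesis using True by (simp add: H_def)
    next
      case False
      have "integral {a..t} F + integral {t..c} F = integral {a..c} F"
        by (rule Henstock_Kurzweil_Integration.integral_combine) (use False ac that int in auto)
      then show ?thesis using False by (simp add: H_def)
    qed
    have x: "x \<in> {a<..<b}" unfolding a_def b_def using d by auto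
    have "((\<lambda>t. integral {a..t} F - integral {a..c} F) has_real_derivative F x) (at x within {a..b})"
      using integral_has_real_derivative[OF cont] x by (auto intro!: derivative_eq_intros)
    moreover have "at x within {a..b} = at x"
      by (rule at_within_interior) (use x in auto)
    ultimately have "((\<lambda>t. integral {a..t} F - integral {a..c} F) has_real_derivative F x) (at x)"
      by simp
    then show ?thesis
      by (rule has_field_derivative_transform_within_open[where S="{a<..<b}"]) (use x H_eq in auto)
  qed
  then show ?thesis using that by blast
qed

lemma mediant_between:
  fixes a b c d :: real
  assumes "a > 0" "b > 0"
  shows "min (c / a) (d / b) \<le> (c + d) / (a + b)" "(c + d) / (a + b) \<le> max (c / a) (d / b)"
  using assms by (auto simp: min_def max_def field_simps)

lemma exists_dyadic_between:
  fixes a e A B :: real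
  assumes "e > 0" "A < B"
  obtains n :: nat and k :: int where "A < a + k * (e / 2^n)" "a + k * (e / 2^n) < B"
proof -
  obtain n where n: "(1/2::real)^n < (B - A) / e"
    using real_arch_pow_inv[of "(B - A) / e" "1/2"] assms by auto
  define s where "s = e / 2^n"
  have s: "s > 0" "s < B - A"
    using n assms by (simp_all add: s_def field_simps power_one_over)
  define k where "k = \<lfloor>(A - a) / s\<rfloor> + 1"
  have "(A - a) / s < of_int k" "of_int k \<le> (A - a) / s + 1"
    unfolding k_def by simp_all
  then have "A < a + k * s" "a + k * s < B"
    using s by (simp_all add: field_simps)
  then show ?thesis using that unfolding s_def by blast
qed

section \<open>Central conics\<close>

definition on_conic :: "real \<Rightarrow> real \<Rightarrow> real \<Rightarrow> real \<Rightarrow> real \<Rightarrow> bool" where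
  "on_conic \<alpha> \<beta> \<gamma> x y \<longleftrightarrow> \<alpha> * x^2 + \<beta> * x * y + \<gamma> * y^2 = 1"

lemma quadratic_eq_zero_if_three_roots:
  fixes a b c u1 u2 u3 :: real
  assumes "a + b * u1 + c * u1^2 = 0" "a + b * u2 + c * u2^2 = 0" "a + b * u3 + c * u3^2 = 0"
    and "u1 \<noteq> u2" "u1 \<noteq> u3" "u2 \<noteq> u3"
  shows "a = 0 \<and> b = 0 \<and> c = 0"
proof -
  have "(u1 - u2) * (b + c * (u1 + u2)) = 0" "(u1 - u3) * (b + c * (u1 + u3)) = 0"
    using assms(1-3) by (simp_all add: power2_eq_square algebra_simps)
  then have "b + c * (u1 + u2) = 0" "b + c * (u1 + u3) = 0"
    using assms(4,5) by simp_all
  moreover have "c * (u2 - u3) = (b + c * (u1 + u2)) - (b + c * (u1 + u3))"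
    by (simp add: algebra_simps)
  ultimately have "c * (u2 - u3) = 0" by simp
  then have "c = 0" using assms(6) by simp
  then show ?thesis
    using \<open>b + c * (u1 + u2) = 0\<close> assms(1) by simp
qed

lemma on_conic_unique:
  assumes nz: "x1 \<noteq> 0" "x2 \<noteq> 0" "x3 \<noteq> 0"
    and indep: "x1 * y2 - y1 * x2 \<noteq> 0" "x1 * y3 - y1 * x3 \<noteq> 0" "x2 * y3 - y2 * x3 \<noteq> 0"
    and "on_conic \<alpha> \<beta> \<gamma> x1 y1" "on_conic \<alpha> \<beta> \<gamma> x2 y2" "on_conic \<alpha> \<beta> \<gamma> x3 y3"
    and "on_conic \<alpha>' \<beta>' \<gamma>' x1 y1" "on_conic \<alpha>' \<beta>' \<gamma>' x2 y2" "on_conic \<alpha>' \<beta>' \<gamma>' x3 y3"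
  shows "\<alpha> = \<alpha>' \<and> \<beta> = \<beta>' \<and> \<gamma> = \<gamma>'"
proof -
  have root: "(\<alpha> - \<alpha>') + (\<beta> - \<beta>') * (y / x) + (\<gamma> - \<gamma>') * (y / x)^2 = 0"
    if "x \<noteq> 0" "on_conic \<alpha> \<beta> \<gamma> x y" "on_conic \<alpha>' \<beta>' \<gamma>' x y" for x y
  proof -
    have "(\<alpha> - \<alpha>') * x^2 + (\<beta> - \<beta>') * x * y + (\<gamma> - \<gamma>') * y^2 = 0"
      using that(2,3) by (simp add: on_conic_def algebra_simps)
    moreover have "(\<alpha> - \<alpha>') + (\<beta> - \<beta>') * (y / x) + (\<gamma> - \<gamma>') * (y / x)^2
        = ((\<alpha> - \<alpha>') * x^2 + (\<beta> - \<beta>') * x * y + (\<gamma> - \<gamma>') * y^2) / x^2"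
      using that(1) by (simp add: field_simps power2_eq_square)
    ultimately show ?thesis by simp
  qed
  have "y1 / x1 \<noteq> y2 / x2" "y1 / x1 \<noteq> y3 / x3" "y2 / x2 \<noteq> y3 / x3"
    using nz indep by (simp_all add: field_simps)
  then show ?thesis
    using quadratic_eq_zero_if_three_roots[OF root root root] nz assms(7-) by simp
qed

text \<open>For fixed \<open>(x, y)\<close> the determinants \<open>a\<^sub>i = x G i - y F i\<close> obey the same recurrence, so
  \<open>a\<^sub>i\<^sup>2 + a\<^sub>i\<^sub>+\<^sub>1\<^sup>2 - m a\<^sub>i a\<^sub>i\<^sub>+\<^sub>1\<close> does not depend on \<open>i\<close>; this invariant form is the conic.\<close>
lemma on_conic_if_linear_recurrence:
  fixes F G :: "nat \<Rightarrow> real"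
  assumes rec: "\<And>i. i + 2 \<le> N \<Longrightarrow> F (i+2) = m * F (i+1) - F i \<and> G (i+2) = m * G (i+1) - G i"
    and det: "F 0 * G 1 - G 0 * F 1 \<noteq> 0"
  shows "\<exists>\<alpha> \<beta> \<gamma>. \<forall>j\<le>N. on_conic \<alpha> \<beta> \<gamma> (F j) (G j)"
proof -
  define D where "D i = F i * G (i+1) - G i * F (i+1)" for i
  define a where "a x y i = x * G i - y * F i" for x y i
  define E where "E x y i = (a x y i)^2 + (a x y (i+1))^2 - m * a x y i * a x y (i+1)" for x y i
  have D_const: "D i = D 0" if "i < N" for i
    using that
  proof (induction i)
    case (Suc i)
    have r: "F (Suc (Suc i)) = m * F (Suc i) - F i" "G (Suc (Suc i)) = m * G (Suc i) - G i"
      using rec[of i] Suc.prems by simp_all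
    have "D (Suc i) = D i" unfolding D_def by (simp add: r algebra_simps)
    then show ?case using Suc by simp
  qed simp
  have E_const: "E x y i = E x y 0" if "i < N" for x y i
    using that
  proof (induction i)
    case (Suc i)
    have r: "F (Suc (Suc i)) = m * F (Suc i) - F i" "G (Suc (Suc i)) = m * G (Suc i) - G i"
      using rec[of i] Suc.prems by simp_all
    have "E x y (Suc i) = E x y i" unfolding E_def a_def by (simp add: r power2_eq_square algebra_simps)
    then show ?case using Suc by simp
  qed simp
  have E_point: "E (F j) (G j) 0 = (D 0)^2" if "j \<le> N" for j
  proof (cases j)
    case 0
    then show ?thesis by (simp add: E_def a_def D_def power2_eq_square algebra_simps)
  next
    case (Suc i)
    then have "E (F j) (G j) 0 = E (F j) (G j) i" using E_const[of i] that by simp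
    also have "\<dots> = (D i)^2" using Suc by (simp add: E_def a_def D_def power2_eq_square algebra_simps)
    finally show ?thesis using D_const[of i] Suc that by simp
  qed
  define \<alpha> where "\<alpha> = ((G 0)^2 + (G 1)^2 - m * G 0 * G 1) / (D 0)^2"
  define \<beta> where "\<beta> = (m * (G 0 * F 1 + F 0 * G 1) - 2 * F 0 * G 0 - 2 * F 1 * G 1) / (D 0)^2"
  define \<gamma> where "\<gamma> = ((F 0)^2 + (F 1)^2 - m * F 0 * F 1) / (D 0)^2"
  have "\<alpha> * x^2 + \<beta> * x * y + \<gamma> * y^2 = E x y 0 / (D 0)^2" for x y
    by (simp add: \<alpha>_def \<beta>_def \<gamma>_def E_def a_def add_divide_distrib diff_divide_distrib
        power2_eq_square algebra_simps)
  then have "on_conic \<alpha> \<beta> \<gamma> (F j) (G j)" if "j \<le> N" for j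
    using E_point[OF that] det by (simp add: on_conic_def D_def)
  then show ?thesis by blast
qed

lemma linear_recurrence_if_midpoint_relations:
  fixes F G :: "nat \<Rightarrow> real"
  assumes F_nz: "\<And>i. i \<le> N \<Longrightarrow> F i \<noteq> 0"
    and det: "\<And>i. i < N \<Longrightarrow> F i * G (i+1) - G i * F (i+1) \<noteq> 0"
    and mid: "\<And>i. i + 2 \<le> N \<Longrightarrow> G (i+1) * (F i + F (i+2)) = F (i+1) * (G i + G (i+2))"
    and four: "\<And>i. i + 3 \<le> N \<Longrightarrow>
      (F i + F (i+3)) * (G (i+1) + G (i+2)) = (G i + G (i+3)) * (F (i+1) + F (i+2))"
  shows "\<exists>m. \<forall>i. i + 2 \<le> N \<longrightarrow> F (i+2) = m * F (i+1) - F i \<and> G (i+2) = m * G (i+1) - G i"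
proof -
  define \<mu> where "\<mu> i = (F i + F (i+2)) / F (i+1)" for i
  have rec: "F (i+2) = \<mu> i * F (i+1) - F i \<and> G (i+2) = \<mu> i * G (i+1) - G i" if "i + 2 \<le> N" for i
    using mid[OF that] F_nz[of "i+1"] that by (auto simp: \<mu>_def field_simps)
  have \<mu>_step: "\<mu> (i+1) = \<mu> i" if "i + 3 \<le> N" for i
  proof -
    have r: "F (i+3) = \<mu> (i+1) * F (i+2) - F (i+1)" "G (i+3) = \<mu> (i+1) * G (i+2) - G (i+1)"
      "F i = \<mu> i * F (i+1) - F (i+2)" "G i = \<mu> i * G (i+1) - G (i+2)"
      using rec[of i] rec[of "i+1"] that by (simp_all add: eval_nat_numeral)
    have "(\<mu> i - \<mu> (i+1)) * (F (i+1) * G (i+2) - G (i+1) * F (i+2))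
        = (F i + F (i+3)) * (G (i+1) + G (i+2)) - (G i + G (i+3)) * (F (i+1) + F (i+2))"
      unfolding r by (simp add: algebra_simps)
    also have "\<dots> = 0" using four[OF that] by simp
    finally have "(\<mu> i - \<mu> (i+1)) * (F (i+1) * G (i+1+1) - G (i+1) * F (i+1+1)) = 0"
      by (simp add: add.assoc)
    then show ?thesis using det[of "i+1"] that by simp
  qed
  have "\<mu> i = \<mu> 0" if "i + 2 \<le> N" for i
    using that by (induction i) (use \<mu>_step in auto)
  then show ?thesis using rec by metis
qed

section \<open>The midpoint equation\<close>

text \<open>Equation \<open>(*)\<close> in the coordinate \<open>p = h x\<close>, for \<open>F = f \<circ> h\<^sup>-\<^sup>1\<close> and \<open>G = g \<circ> h\<^sup>-\<^sup>1\<close>.\<close>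
locale midpoint_equation =
  fixes J :: "real set" and F G :: "real \<Rightarrow> real"
  assumes open_J: "open J" and interval_J: "is_interval J" and nonempty_J: "J \<noteq> {}"
    and F_pos: "\<And>p. p \<in> J \<Longrightarrow> F p > 0"
    and continuous_ratio: "continuous_on J (\<lambda>p. G p / F p)"
    and inj_ratio: "inj_on (\<lambda>p. G p / F p) J"
    and midpoint: "\<And>p r. p \<in> J \<Longrightarrow> r \<in> J \<Longrightarrow>
      G ((p + r) / 2) * (F p + F r) = F ((p + r) / 2) * (G p + G r)"
begin

lemma midpoint_mem:
  assumes "p \<in> J" "r \<in> J"
  shows "(p + r) / 2 \<in> J"
proof -
  have "min p r \<in> J" "max p r \<in> J" using assms by (simp_all add: min_def max_def)
  moreover have "min p r \<le> (p + r) / 2" "(p + r) / 2 \<le> max p r" by simp_all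
  ultimately show ?thesis using mem_is_interval_1_I[OF interval_J] by blast
qed

lemma det_nonzero:
  assumes "p \<in> J" "r \<in> J" "p \<noteq> r"
  shows "F p * G r - G p * F r \<noteq> 0"
proof
  assume "F p * G r - G p * F r = 0"
  then have "G p / F p = G r / F r"
    using F_pos[OF assms(1)] F_pos[OF assms(2)] by (simp add: field_simps)
  then show False using inj_ratio assms unfolding inj_on_def by blast
qed

lemma midpoint_pairs:
  assumes "p \<in> J" "q \<in> J" "r \<in> J" "t \<in> J" "p + t = q + r"
  shows "(F p + F t) * (G q + G r) = (G p + G t) * (F q + F r)"
proof -
  define c where "c = (p + t) / 2"
  have c: "c = (q + r) / 2" using assms(5) by (simp add: c_def)
  have mid: "G c * (F p + F t) = F c * (G p + G t)" "G c * (F q + F r) = F c * (G q + G r)"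
    using midpoint[OF assms(1,4), folded c_def] midpoint[OF assms(2,3), folded c] by simp_all
  have "F c * ((F p + F t) * (G q + G r) - (G p + G t) * (F q + F r))
      = (F p + F t) * (F c * (G q + G r)) - (F q + F r) * (F c * (G p + G t))"
    by (simp add: algebra_simps)
  also have "\<dots> = 0" unfolding mid[symmetric] by (simp add: algebra_simps)
  finally show ?thesis using F_pos[OF midpoint_mem[OF assms(1,4)]] by (simp add: c_def)
qed

text \<open>The midpoint equation determines \<open>F r\<close> from \<open>F p\<close> and the continuous ratio \<open>G/F\<close>.\<close>
lemma continuous_F: "continuous_on J F"
proof -
  define U where "U p = G p / F p" for p
  have U_cont: "isCont U z" if "z \<in> J" for z
    using continuous_on_eq_continuous_at[OF open_J] continuous_ratio that unfolding U_def by blast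
  have "isCont F y" if "y \<in> J" for y
  proof -
    obtain d where d: "d > 0" "ball y d \<subseteq> J" using open_J \<open>y \<in> J\<close> open_contains_ball by blast
    define p where "p = y + d / 2"
    have "p \<in> J" "p \<noteq> y" using d by (auto simp: p_def dist_real_def subset_iff)
    define R where "R r = F p * (U ((p + r) / 2) - U p) / (U r - U ((p + r) / 2))" for r
    have U_ne: "U r \<noteq> U ((p + r) / 2)" if "r \<in> J" "r \<noteq> p" for r
      using inj_ratio midpoint_mem[OF \<open>p \<in> J\<close> that(1)] that unfolding inj_on_def U_def by force
    have F_eq: "F r = R r" if "r \<in> J" "r \<noteq> p" for r
    proof -
      have "U ((p + r) / 2) * (F p + F r) = G p + G r"
        using midpoint[OF \<open>p \<in> J\<close> that(1)] F_pos[OF midpoint_mem[OF \<open>p \<in> J\<close> that(1)]]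
        by (simp add: U_def field_simps)
      also have "\<dots> = U p * F p + U r * F r"
        using F_pos[OF that(1)] F_pos[OF \<open>p \<in> J\<close>] by (simp add: U_def)
      finally have "F r * (U r - U ((p + r) / 2)) = F p * (U ((p + r) / 2) - U p)"
        by (simp add: algebra_simps)
      then show ?thesis using U_ne[OF that] by (simp add: R_def field_simps)
    qed
    have "isCont (\<lambda>r. (p + r) / 2) y" by (intro continuous_intros) simp
    then have "isCont (\<lambda>r. U ((p + r) / 2)) y"
      using isCont_o2 U_cont[OF midpoint_mem[OF \<open>p \<in> J\<close> \<open>y \<in> J\<close>]] by blast
    then have "isCont R y"
      unfolding R_def using U_cont[OF \<open>y \<in> J\<close>] U_ne[OF \<open>y \<in> J\<close>] \<open>p \<noteq> y\<close>
      by (intro continuous_intros) auto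
    moreover have "\<forall>\<^sub>F r in nhds y. r \<in> J - {p}"
      using open_J \<open>y \<in> J\<close> \<open>p \<noteq> y\<close> by (intro eventually_nhds_in_open) auto
    then have "\<forall>\<^sub>F r in nhds y. F r = R r"
      by (rule eventually_mono) (use F_eq in blast)
    ultimately show ?thesis using isCont_cong by blast
  qed
  then show ?thesis by (simp add: continuous_at_imp_continuous_on)
qed

lemma continuous_G: "continuous_on J G"
proof -
  have "continuous_on J (\<lambda>p. G p / F p * F p)"
    using continuous_ratio continuous_F by (rule continuous_on_mult)
  then show ?thesis
    by (rule continuous_on_cong[THEN iffD1, rotated 2]) (use F_pos in force)+
qed

lemma on_conic_grid:
  assumes "s > 0" "lo < hi" "a + of_int lo * s \<in> J" "a + of_int hi * s \<in> J"
  shows "\<exists>\<alpha> \<beta> \<gamma>. \<forall>i. lo \<le> i \<and> i \<le> hi \<longrightarrow>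
    on_conic \<alpha> \<beta> \<gamma> (F (a + of_int i * s)) (G (a + of_int i * s))"
proof -
  define N where "N = nat (hi - lo)"
  define P where "P n = a + (of_int lo + real n) * s" for n
  have P_mem: "P n \<in> J" if "n \<le> N" for n
  proof (rule mem_is_interval_1_I[OF interval_J assms(3,4)])
    show "a + of_int lo * s \<le> P n" "P n \<le> a + of_int hi * s"
      using that assms(1,2) by (simp_all add: P_def N_def mult_right_mono)
  qed
  have P_ne: "P i \<noteq> P j" if "i \<noteq> j" for i j
    using that assms(1) by (simp add: P_def)
  have P_mid: "(P i + P (i+2)) / 2 = P (i+1)" for i
    by (simp add: P_def field_simps)
  obtain m where "\<forall>i. i + 2 \<le> N \<longrightarrow> F (P (i+2)) = m * F (P (i+1)) - F (P i)
      \<and> G (P (i+2)) = m * G (P (i+1)) - G (P i)"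
  proof (atomize_elim, rule linear_recurrence_if_midpoint_relations)
    show "F (P i) \<noteq> 0" if "i \<le> N" for i
      using F_pos[OF P_mem[OF that]] by simp
    show "F (P i) * G (P (i+1)) - G (P i) * F (P (i+1)) \<noteq> 0" if "i < N" for i
      using that by (intro det_nonzero P_mem P_ne) auto
    show "G (P (i+1)) * (F (P i) + F (P (i+2))) = F (P (i+1)) * (G (P i) + G (P (i+2)))"
      if "i + 2 \<le> N" for i
      using midpoint[of "P i" "P (i+2)"] P_mem that unfolding P_mid by simp
    show "(F (P i) + F (P (i+3))) * (G (P (i+1)) + G (P (i+2)))
        = (G (P i) + G (P (i+3))) * (F (P (i+1)) + F (P (i+2)))" if "i + 3 \<le> N" for i
      using that by (intro midpoint_pairs P_mem) (auto simp: P_def algebra_simps)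
  qed
  then obtain \<alpha> \<beta> \<gamma> where conic: "\<And>n. n \<le> N \<Longrightarrow> on_conic \<alpha> \<beta> \<gamma> (F (P n)) (G (P n))"
    using on_conic_if_linear_recurrence[of N "\<lambda>n. F (P n)" m "\<lambda>n. G (P n)"]
      det_nonzero[OF P_mem P_mem P_ne, of 0 1] assms(2) by (auto simp: N_def)
  have "on_conic \<alpha> \<beta> \<gamma> (F (a + of_int i * s)) (G (a + of_int i * s))" if "lo \<le> i" "i \<le> hi" for i
    using conic[of "nat (i - lo)"] that by (simp add: P_def N_def algebra_simps)
  then show ?thesis by blast
qed

text \<open>Refining the grid by a factor \<open>2\<^sup>n\<close> keeps the three points \<open>a\<close>, \<open>a + e\<close>, \<open>a + 2e\<close>, and
  a conic through three pairwise independent points is unique.\<close>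
lemma on_conic_dyadic:
  assumes "a \<in> J" "e > 0" "a + 2 * e \<in> J"
    and conic: "\<And>i. 0 \<le> i \<Longrightarrow> i \<le> (2::int) \<Longrightarrow>
      on_conic \<alpha> \<beta> \<gamma> (F (a + of_int i * e)) (G (a + of_int i * e))"
    and t: "a + of_int k * (e / 2^n) \<in> J"
  shows "on_conic \<alpha> \<beta> \<gamma> (F (a + of_int k * (e / 2^n))) (G (a + of_int k * (e / 2^n)))"
proof -
  define s where "s = e / 2^n"
  define lo where "lo = min 0 k"
  define hi where "hi = max k (2 * 2^n)"
  have s: "s > 0" "of_int (2^n) * s = e" using assms(2) by (simp_all add: s_def)
  have "a + of_int lo * s \<in> J" using \<open>a \<in> J\<close> t by (simp add: lo_def min_def s_def)
  moreover have "a + of_int hi * s \<in> J"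
    using \<open>a + 2 * e \<in> J\<close> t s(2) by (simp add: hi_def max_def s_def)
  moreover have "lo \<le> 0" "2 * 2^n \<le> hi" "(0::int) < 2 * 2^n" by (simp_all add: lo_def hi_def)
  then have "lo < hi" by linarith
  ultimately obtain \<alpha>' \<beta>' \<gamma>' where grid: "\<And>i. lo \<le> i \<Longrightarrow> i \<le> hi \<Longrightarrow>
      on_conic \<alpha>' \<beta>' \<gamma>' (F (a + of_int i * s)) (G (a + of_int i * s))"
    using on_conic_grid[OF s(1)] by blast
  have pt: "a + of_int (i * 2^n) * s = a + of_int i * e" for i
    using s(2) by (simp add: algebra_simps)
  have mem: "a + of_int i * e \<in> J" if "0 \<le> i" "i \<le> 2" for i :: int
    by (rule mem_is_interval_1_I[OF interval_J \<open>a \<in> J\<close> \<open>a + 2 * e \<in> J\<close>])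
       (use that assms(2) in \<open>auto intro: mult_right_mono\<close>)
  have grid': "on_conic \<alpha>' \<beta>' \<gamma>' (F (a + of_int i * e)) (G (a + of_int i * e))"
    if "0 \<le> i" "i \<le> 2" for i :: int
  proof -
    have "lo \<le> 0" "0 \<le> i * 2^n" using that by (simp_all add: lo_def)
    then have "lo \<le> i * 2^n" by linarith
    moreover have "i * 2^n \<le> hi" using that by (simp add: hi_def le_max_iff_disj)
    ultimately show ?thesis using grid[of "i * 2^n"] unfolding pt by blast
  qed
  have F_ne: "F (a + of_int i * e) \<noteq> 0" if "0 \<le> i" "i \<le> 2" for i :: int
    using F_pos[OF mem[OF that]] by simp
  have indep: "F (a + of_int i * e) * G (a + of_int j * e) - G (a + of_int i * e) * F (a + of_int j * e) \<noteq> 0"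
    if "0 \<le> i" "i < j" "j \<le> 2" for i j :: int
    using that assms(2) by (intro det_nonzero mem) auto
  have "\<alpha> = \<alpha>' \<and> \<beta> = \<beta>' \<and> \<gamma> = \<gamma>'"
    by (rule on_conic_unique[OF F_ne[of 0] F_ne[of 1] F_ne[of 2] indep[of 0 1] indep[of 0 2] indep[of 1 2]
          conic[of 0] conic[of 1] conic[of 2] grid'[of 0] grid'[of 1] grid'[of 2]]) simp_all
  then show ?thesis using grid[of k] by (simp add: lo_def hi_def s_def)
qed

theorem exists_on_conic: "\<exists>\<alpha> \<beta> \<gamma>. \<forall>p\<in>J. on_conic \<alpha> \<beta> \<gamma> (F p) (G p)"
proof -
  obtain a d where a: "a \<in> J" "d > 0" "ball a d \<subseteq> J"
    using nonempty_J open_J open_contains_ball by blast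
  define e where "e = d / 4"
  have e: "e > 0" "a + 2 * e \<in> J" using a by (auto simp: e_def dist_real_def subset_iff)
  obtain \<alpha> \<beta> \<gamma> where conic: "\<forall>i. 0 \<le> i \<and> i \<le> (2::int) \<longrightarrow>
      on_conic \<alpha> \<beta> \<gamma> (F (a + of_int i * e)) (G (a + of_int i * e))"
    using on_conic_grid[of e 0 2 a] a e by auto
  define Q where "Q p = \<alpha> * (F p)^2 + \<beta> * F p * G p + \<gamma> * (G p)^2" for p
  have "Q p = 1" if "p \<in> J" for p
  proof (rule ccontr)
    assume "Q p \<noteq> 1"
    moreover have "isCont Q p"
      using continuous_F continuous_G open_J that
      unfolding Q_def continuous_on_eq_continuous_at[OF open_J] by (intro continuous_intros) auto
    ultimately obtain \<epsilon> where "\<epsilon> > 0" and \<epsilon>: "\<And>t. dist p t < \<epsilon> \<Longrightarrow> Q t \<noteq> 1"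
      using continuous_at_avoid by blast
    obtain \<delta> where "\<delta> > 0" "ball p \<delta> \<subseteq> J" using open_contains_ball open_J \<open>p \<in> J\<close> by meson
    then have "p < p + min \<epsilon> \<delta>" using \<open>\<epsilon> > 0\<close> by simp
    then obtain n k where k: "p < a + of_int k * (e / 2^n)" "a + of_int k * (e / 2^n) < p + min \<epsilon> \<delta>"
      by (rule exists_dyadic_between[OF e(1)])
    then have "a + of_int k * (e / 2^n) \<in> J"
      using \<open>ball p \<delta> \<subseteq> J\<close> by (auto simp: dist_real_def subset_iff)
    then have "Q (a + of_int k * (e / 2^n)) = 1"
      using on_conic_dyadic[OF a(1) e conic[rule_format]] by (simp add: Q_def on_conic_def)
    then show False using \<epsilon> k by (simp add: dist_real_def)
  qed
  then show ?thesis by (auto simp: Q_def on_conic_def)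
qed

end

section \<open>Quasi-arithmetic means of conics\<close>

lemma eq_star_intro:
  assumes "inj_on (\<lambda>x. g x / f x) I" "inj_on h I"
    and "\<And>x y. x \<in> I \<Longrightarrow> y \<in> I \<Longrightarrow>
      \<exists>z\<in>I. g z / f z = (g x + g y) / (f x + f y) \<and> h z = (h x + h y) / 2"
  shows "eq_star I f g h"
  unfolding eq_star_def
proof (intro ballI)
  fix x y assume "x \<in> I" "y \<in> I"
  then obtain z where z: "z \<in> I" "g z / f z = (g x + g y) / (f x + f y)" "h z = (h x + h y) / 2"
    using assms(3) by blast
  then show "the_inv_into I (\<lambda>t. g t / f t) ((g x + g y) / (f x + f y))
      = the_inv_into I h ((h x + h y) / 2)"
    using the_inv_into_f_eq[OF assms(1)] the_inv_into_f_eq[OF assms(2)] by metis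
qed

lemma eq_star_common_point:
  assumes "is_interval I" "\<And>x. x \<in> I \<Longrightarrow> f x > 0"
    and "continuous_on I (\<lambda>x. g x / f x)" "inj_on (\<lambda>x. g x / f x) I"
    and "continuous_on I h" "inj_on h I" "eq_star I f g h" "x \<in> I" "y \<in> I"
  shows "\<exists>z\<in>I. g z / f z = (g x + g y) / (f x + f y) \<and> h z = (h x + h y) / 2"
proof -
  obtain z1 where z1: "z1 \<in> I" "g z1 / f z1 = (g x + g y) / (f x + f y)"
    using in_image_if_between[OF assms(3,1,8,9)] mediant_between[OF assms(2)[OF assms(8)] assms(2)[OF assms(9)]]
    by (metis (no_types, lifting) imageE)
  have "min (h x) (h y) \<le> (h x + h y) / 2" "(h x + h y) / 2 \<le> max (h x) (h y)" by simp_all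
  then obtain z2 where z2: "z2 \<in> I" "h z2 = (h x + h y) / 2"
    using in_image_if_between[OF assms(5,1,8,9)] by (metis imageE)
  have "z1 = z2"
    using assms(7-9) z1 z2 the_inv_into_f_eq[OF assms(4)] the_inv_into_f_eq[OF assms(6)]
    unfolding eq_star_def by metis
  then show ?thesis using z1 z2 by blast
qed

lemma conic_if_eq_star:
  assumes "open I" "is_interval I" "I \<noteq> {}" "B0 I f g"
    and "continuous_on I h" "strictly_monotone_on I h" "eq_star I f g h"
  shows "\<exists>\<alpha> \<beta> \<gamma>. \<forall>x\<in>I. \<alpha> * (f x)^2 + \<beta> * f x * g x + \<gamma> * (g x)^2 = 1"
proof -
  have f_pos: "\<And>x. x \<in> I \<Longrightarrow> f x > 0" and u_cont: "continuous_on I (\<lambda>x. g x / f x)"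
    and u_inj: "inj_on (\<lambda>x. g x / f x) I"
    using assms(4) strictly_monotone_on_imp_inj_on unfolding B0_def by auto
  have h_inj: "inj_on h I" using strictly_monotone_on_imp_inj_on[OF assms(6)] .
  define \<phi> where "\<phi> = the_inv_into I h"
  have \<phi>_h: "\<phi> (h x) = x" if "x \<in> I" for x
    unfolding \<phi>_def using the_inv_into_f_f[OF h_inj that] .
  have \<phi>_mem: "\<phi> p \<in> I" if "p \<in> h ` I" for p
    using that \<phi>_h by auto
  have \<phi>_cont: "continuous_on (h ` I) \<phi>"
    using continuous_on_inverse_open[OF assms(1,5) _ \<phi>_h] by simp
  interpret midpoint_equation "h ` I" "\<lambda>p. f (\<phi> p)" "\<lambda>p. g (\<phi> p)"
  proof
    show "open (h ` I)" using invariance_of_domain[OF assms(5,1) h_inj] .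
    show "is_interval (h ` I)" using is_interval_continuous_image[OF assms(5,2)] .
    show "h ` I \<noteq> {}" using assms(3) by simp
    show "f (\<phi> p) > 0" if "p \<in> h ` I" for p using f_pos \<phi>_mem that by blast
    show "continuous_on (h ` I) (\<lambda>p. g (\<phi> p) / f (\<phi> p))"
      using continuous_on_compose2[OF u_cont \<phi>_cont] \<phi>_mem by blast
    show "inj_on (\<lambda>p. g (\<phi> p) / f (\<phi> p)) (h ` I)"
      using u_inj \<phi>_h \<phi>_mem unfolding inj_on_def by (metis imageE)
    show "g (\<phi> ((p + r) / 2)) * (f (\<phi> p) + f (\<phi> r)) = f (\<phi> ((p + r) / 2)) * (g (\<phi> p) + g (\<phi> r))"
      if pr: "p \<in> h ` I" "r \<in> h ` I" for p r
    proof -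
      obtain x y where xy: "x \<in> I" "y \<in> I" "p = h x" "r = h y" using pr by blast
      obtain z where z: "z \<in> I" "g z / f z = (g x + g y) / (f x + f y)" "h z = (h x + h y) / 2"
        using eq_star_common_point[OF assms(2) f_pos u_cont u_inj assms(5) h_inj assms(7) xy(1,2)] by blast
      have "\<phi> ((p + r) / 2) = z" using z(1,3) xy \<phi>_h by metis
      then show ?thesis
        using z(2) xy \<phi>_h f_pos[OF z(1)] f_pos[OF xy(1)] f_pos[OF xy(2)] by (simp add: field_simps)
    qed
  qed
  obtain \<alpha> \<beta> \<gamma> where "\<forall>p\<in>h ` I. on_conic \<alpha> \<beta> \<gamma> (f (\<phi> p)) (g (\<phi> p))"
    using exists_on_conic by blast
  then show ?thesis using \<phi>_h unfolding on_conic_def by auto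
qed

lemma quadratic_at_weighted_mean:
  fixes \<alpha> \<beta> \<gamma> a b s t :: real
  assumes q: "\<And>s. q s = \<alpha> + \<beta> * s + \<gamma> * s^2"
    and "a > 0" "b > 0" "a^2 = q s" "b^2 = q t"
  shows "q ((s * b + t * a) / (b + a)) * (b + a)^2
    = 2 * a * b^2 * (b + a + (s - t) * ((\<beta> + 2 * \<gamma> * t) / (2 * b)))"
proof -
  define m where "m = (s * b + t * a) / (b + a)"
  have m: "m * (b + a) = s * b + t * a" using assms(2,3) by (simp add: m_def)
  have "q m * (b + a)^2 = \<alpha> * (b + a)^2 + \<beta> * (m * (b + a)) * (b + a) + \<gamma> * (m * (b + a))^2"
    by (simp add: q power2_eq_square algebra_simps)
  also have "\<dots> = \<alpha> * (b + a)^2 + \<beta> * (s * b + t * a) * (b + a) + \<gamma> * (s * b + t * a)^2"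
    unfolding m ..
  also have "\<dots> = b^2 * q s + a^2 * q t + a * b * (2 * \<alpha> + \<beta> * (s + t) + 2 * \<gamma> * s * t)"
    by (simp add: q power2_eq_square algebra_simps)
  also have "\<dots> = 2 * a^2 * b^2 + a * b * (2 * b^2 + (s - t) * (\<beta> + 2 * \<gamma> * t))"
  proof -
    have K: "2 * \<alpha> + \<beta> * (s + t) + 2 * \<gamma> * s * t = 2 * b^2 + (s - t) * (\<beta> + 2 * \<gamma> * t)"
      unfolding assms(5) by (simp add: q algebra_simps power2_eq_square)
    show ?thesis unfolding K assms(4,5)[symmetric] by (simp add: algebra_simps)
  qed
  also have "\<dots> = 2 * a * b^2 * (b + a + (s - t) * ((\<beta> + 2 * \<gamma> * t) / (2 * b)))"
    using assms(3) by (simp add: field_simps power2_eq_square)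
  finally show ?thesis by (simp add: m_def)
qed

text \<open>The difference of the two sides vanishes at \<open>t = s\<close> and has derivative zero in \<open>t\<close>.\<close>
lemma primitive_inverse_quadratic_midpoint:
  fixes \<alpha> \<beta> \<gamma> :: real and H :: "real \<Rightarrow> real"
  assumes q: "\<And>s. q s = \<alpha> + \<beta> * s + \<gamma> * s^2"
    and "is_interval U" and q_pos: "\<And>s. s \<in> U \<Longrightarrow> q s > 0"
    and H: "\<And>s. s \<in> U \<Longrightarrow> (H has_real_derivative 1 / q s) (at s)"
    and "s \<in> U" "t \<in> U"
  shows "H ((s * sqrt (q t) + t * sqrt (q s)) / (sqrt (q t) + sqrt (q s))) = (H s + H t) / 2"
proof -
  define a where "a = sqrt (q s)"
  have a: "a > 0" "a^2 = q s" using q_pos[OF \<open>s \<in> U\<close>] by (simp_all add: a_def)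
  define m where "m t = (s * sqrt (q t) + t * a) / (sqrt (q t) + a)" for t
  have m_mem: "m t \<in> U" if "t \<in> U" for t
  proof -
    have "min s t \<le> m t" "m t \<le> max s t"
      using mediant_between[of "sqrt (q t)" a "s * sqrt (q t)" "t * a"] q_pos[OF that] a(1)
      by (simp_all add: m_def)
    moreover have "min s t \<in> U" "max s t \<in> U" using \<open>s \<in> U\<close> that by (simp_all add: min_def max_def)
    ultimately show ?thesis using mem_is_interval_1_I[OF assms(2)] by blast
  qed
  have "((\<lambda>t. H (m t) - (H s + H t) / 2) has_real_derivative 0) (at t)" if "t \<in> U" for t
  proof -
    define b where "b = sqrt (q t)"
    have b: "b > 0" "b^2 = q t" using q_pos[OF that] by (simp_all add: b_def)
    define b' where "b' = (\<beta> + 2 * \<gamma> * t) / (2 * b)"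
    have dsq: "((\<lambda>t. sqrt (q t)) has_real_derivative b') (at t)"
      using q_pos[OF that] unfolding q b'_def b_def
      by (auto intro!: derivative_eq_intros simp: field_simps)
    have dnum: "((\<lambda>t. s * sqrt (q t) + t * a) has_real_derivative s * b' + a) (at t)"
      using DERIV_add[OF DERIV_cmult[OF dsq, of s] DERIV_cmult_right[OF DERIV_ident, of a]] by simp
    have dden: "((\<lambda>t. sqrt (q t) + a) has_real_derivative b') (at t)"
      using DERIV_add[OF dsq DERIV_const[of a]] by simp
    have den: "sqrt (q t) + a \<noteq> 0" using a(1) b(1) unfolding b_def by linarith
    have "(m has_real_derivative ((s * b' + a) * (b + a) - (s * b + t * a) * b') / (b + a)^2) (at t)"
      using DERIV_divide[OF dnum dden den] unfolding m_def[abs_def] b_def by (simp add: power2_eq_square)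
    moreover have "((s * b' + a) * (b + a) - (s * b + t * a) * b') = a * (b + a + (s - t) * b')"
      by (simp add: algebra_simps)
    ultimately have dm: "(m has_real_derivative a * (b + a + (s - t) * b') / (b + a)^2) (at t)"
      by simp
    have "q (m t) * (b + a)^2 = 2 * a * b^2 * (b + a + (s - t) * b')"
      using quadratic_at_weighted_mean[OF q a(1) b(1) a(2) b(2)] by (simp add: m_def b_def b'_def)
    then have "a * (b + a + (s - t) * b') / (b + a)^2 = q (m t) / (2 * b^2)"
      using a(1) b(1) by (simp add: frac_eq_eq algebra_simps)
    then have "1 / q (m t) * (a * (b + a + (s - t) * b') / (b + a)^2) = 1 / q t / 2"
      using q_pos[OF m_mem[OF that]] b(2) by simp
    then show ?thesis
      using DERIV_chain2[OF H[OF m_mem[OF that]] dm] H[OF that]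
      by (auto intro!: derivative_eq_intros)
  qed
  then have "H (m t) - (H s + H t) / 2 = H (m s) - (H s + H s) / 2"
    using constant_on_interval_if_deriv_zero[OF assms(2)] \<open>s \<in> U\<close> \<open>t \<in> U\<close> by blast
  moreover have "m s = s" using a(1) by (simp add: m_def a_def field_simps)
  ultimately show ?thesis by (simp add: m_def a_def)
qed

lemma quadratic_at_ratio:
  fixes \<alpha> \<beta> \<gamma> x y :: real
  assumes "x \<noteq> 0" "\<alpha> * x^2 + \<beta> * x * y + \<gamma> * y^2 = 1"
  shows "\<alpha> + \<beta> * (y / x) + \<gamma> * (y / x)^2 = 1 / x^2"
proof -
  have "\<alpha> + \<beta> * (y / x) + \<gamma> * (y / x)^2 = (\<alpha> * x^2 + \<beta> * x * y + \<gamma> * y^2) / x^2"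
    using assms(1) by (simp add: field_simps power2_eq_square)
  then show ?thesis using assms(2) by simp
qed

lemma mediant_eq_weighted_mean:
  fixes a b c d :: real
  assumes "a > 0" "b > 0"
  shows "(c + d) / (a + b) = (c / a * (1 / b) + d / b * (1 / a)) / (1 / b + 1 / a)"
proof -
  have "c / a * (1 / b) + d / b * (1 / a) = (c + d) / (a * b)" "1 / b + 1 / a = (a + b) / (a * b)"
    using assms by (simp_all add: field_simps)
  then show ?thesis using assms by simp
qed

text \<open>With \<open>u = g/f\<close> and \<open>q(s) = \<alpha> + \<beta> s + \<gamma> s\<^sup>2\<close> the conic gives \<open>f = 1/\<surd>q(u)\<close>, so the mean in
  \<open>(*)\<close> is the weighted mean of \<open>u x\<close> and \<open>u y\<close> in \<open>primitive_inverse_quadratic_midpoint\<close>.\<close>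
lemma conic_primitive_midpoint:
  assumes "open I" "is_interval I" "I \<noteq> {}" "B0 I f g"
    and conic: "\<And>x. x \<in> I \<Longrightarrow> \<alpha> * (f x)^2 + \<beta> * f x * g x + \<gamma> * (g x)^2 = 1"
  obtains H where "\<And>x. x \<in> I \<Longrightarrow> (H has_real_derivative (f x)^2) (at (g x / f x))"
    and "strictly_monotone_on I (\<lambda>x. H (g x / f x))" "continuous_on I (\<lambda>x. H (g x / f x))"
    and "\<And>x y. x \<in> I \<Longrightarrow> y \<in> I \<Longrightarrow> \<exists>z\<in>I. g z / f z = (g x + g y) / (f x + f y)
      \<and> H (g z / f z) = (H (g x / f x) + H (g y / f y)) / 2"
proof -
  define u where "u x = g x / f x" for x
  define q where "q s = \<alpha> + \<beta> * s + \<gamma> * s^2" for s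
  have f_pos: "\<And>x. x \<in> I \<Longrightarrow> f x > 0" and u_cont: "continuous_on I u"
    and u_mono: "strictly_monotone_on I u"
    using assms(4) unfolding B0_def u_def[abs_def] by auto
  have q_u: "q (u x) = 1 / (f x)^2" if "x \<in> I" for x
    using quadratic_at_ratio[OF _ conic[OF that]] f_pos[OF that] by (simp add: q_def u_def)
  have sqrt_q: "sqrt (q (u x)) = 1 / f x" if "x \<in> I" for x
    using q_u[OF that] f_pos[OF that] by (simp add: real_sqrt_divide)
  have q_pos: "q s > 0" if s: "s \<in> u ` I" for s
  proof -
    obtain x where "x \<in> I" "s = u x" using s by blast
    then show ?thesis using q_u f_pos[OF \<open>x \<in> I\<close>] by simp
  qed
  have U: "open (u ` I)" "is_interval (u ` I)" "u ` I \<noteq> {}"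
    using invariance_of_domain[OF u_cont assms(1) strictly_monotone_on_imp_inj_on[OF u_mono]]
      is_interval_continuous_image[OF u_cont assms(2)] assms(3) by simp_all
  have "\<alpha> + \<beta> * s + \<gamma> * s^2 \<noteq> 0" if "s \<in> u ` I" for s
    using q_pos[OF that] by (simp add: q_def)
  then have "continuous_on (u ` I) (\<lambda>s. 1 / q s)"
    unfolding q_def by (intro continuous_intros) auto
  then obtain H where H: "\<And>s. s \<in> u ` I \<Longrightarrow> (H has_real_derivative 1 / q s) (at s)"
    using exists_antiderivative_on_open_interval[OF U] by blast
  show thesis
  proof
    show "(H has_real_derivative (f x)^2) (at (g x / f x))" if "x \<in> I" for x
      using H[of "u x"] q_u[OF that] that by (simp add: u_def)
    have "strict_mono_on (u ` I) H"
      using H q_pos by (intro strict_mono_on_if_deriv_pos[OF U(2), of _ "\<lambda>s. 1 / q s"]) simp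
    from strictly_monotone_on_compose[OF u_mono this]
    show "strictly_monotone_on I (\<lambda>x. H (g x / f x))" unfolding u_def .
    have "continuous_on (u ` I) H"
      using H by (intro DERIV_continuous_on[where D="\<lambda>s. 1 / q s"]) (auto intro: has_field_derivative_at_within)
    from continuous_on_compose2[OF this u_cont]
    show "continuous_on I (\<lambda>x. H (g x / f x))" unfolding u_def by blast
    show "\<exists>z\<in>I. g z / f z = (g x + g y) / (f x + f y) \<and> H (g z / f z) = (H (g x / f x) + H (g y / f y)) / 2"
      if xy: "x \<in> I" "y \<in> I" for x y
    proof -
      have "(g x + g y) / (f x + f y) \<in> u ` I"
        using in_image_if_between[OF u_cont assms(2) xy]
          mediant_between[OF f_pos[OF xy(1)] f_pos[OF xy(2)], of "g x" "g y"]
        unfolding u_def by blast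
      then obtain z where z: "z \<in> I" "u z = (g x + g y) / (f x + f y)" by (metis imageE)
      have "u z = (u x * (1 / f y) + u y * (1 / f x)) / (1 / f y + 1 / f x)"
        unfolding z(2) unfolding u_def by (rule mediant_eq_weighted_mean[OF f_pos[OF xy(1)] f_pos[OF xy(2)]])
      then have "H (u z) = (H (u x) + H (u y)) / 2"
        using primitive_inverse_quadratic_midpoint[OF q_def U(2) q_pos H, of "u x" "u y"] xy
        unfolding sqrt_q[OF xy(1)] sqrt_q[OF xy(2)] by simp
      then show ?thesis using z unfolding u_def by blast
    qed
  qed
qed

lemma eq_star_if_conic:
  assumes "open I" "is_interval I" "I \<noteq> {}" "B0 I f g"
    and "\<And>x. x \<in> I \<Longrightarrow> \<alpha> * (f x)^2 + \<beta> * f x * g x + \<gamma> * (g x)^2 = 1"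
  shows "\<exists>h. continuous_on I h \<and> strictly_monotone_on I h \<and> eq_star I f g h"
proof -
  obtain H where "\<And>x. x \<in> I \<Longrightarrow> (H has_real_derivative (f x)^2) (at (g x / f x))"
    and H: "strictly_monotone_on I (\<lambda>x. H (g x / f x))" "continuous_on I (\<lambda>x. H (g x / f x))"
    and mid: "\<And>x y. x \<in> I \<Longrightarrow> y \<in> I \<Longrightarrow> \<exists>z\<in>I. g z / f z = (g x + g y) / (f x + f y)
      \<and> H (g z / f z) = (H (g x / f x) + H (g y / f y)) / 2"
    using conic_primitive_midpoint[OF assms] by blast
  have "eq_star I f g (\<lambda>x. H (g x / f x))"
    using assms(4) strictly_monotone_on_imp_inj_on H(1) mid
    unfolding B0_def by (intro eq_star_intro) auto
  then show ?thesis using H by blast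
qed

section \<open>Wronskians\<close>

lemma nderiv_0 [simp]: "nderiv 0 f = f"
  by (simp add: nderiv_def)

lemma nderiv_Suc [simp]: "nderiv (Suc k) f = deriv (nderiv k f)"
  by (simp add: nderiv_def)

lemma nderiv_2 [simp]: "nderiv 2 f = deriv (deriv f)"
  by (simp add: nderiv_def numeral_2_eq_2)

lemma W_1_0: "W 1 0 f g x = deriv f x * g x - f x * deriv g x"
  by (simp add: W_def)

lemma W_2_0: "W 2 0 f g x = deriv (deriv f) x * g x - f x * deriv (deriv g) x"
  by (simp add: W_def)

lemma W_2_1: "W 2 1 f g x = deriv (deriv f) x * deriv g x - deriv f x * deriv (deriv g) x"
  by (simp add: W_def)

lemma C_n_on_has_derivative:
  assumes "C_n_on n I f" "k < n" "x \<in> I"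
  shows "(nderiv k f has_real_derivative nderiv (Suc k) f x) (at x)"
  using assms unfolding C_n_on_def by (simp add: DERIV_deriv_iff_real_differentiable)

lemma C_n_on_mono: "C_n_on n I f \<Longrightarrow> m \<le> n \<Longrightarrow> C_n_on m I f"
  unfolding C_n_on_def by simp

lemma Bn_mono: "Bn n I f g \<Longrightarrow> m \<le> n \<Longrightarrow> Bn m I f g"
  unfolding Bn_def using C_n_on_mono by blast

lemma Bn_has_derivative:
  assumes "Bn n I f g" "1 \<le> n" "x \<in> I"
  shows "(f has_real_derivative deriv f x) (at x)" "(g has_real_derivative deriv g x) (at x)"
  using C_n_on_has_derivative[of n I _ 0 x] assms by (auto simp: Bn_def)

lemma Bn_has_second_derivative:
  assumes "Bn n I f g" "2 \<le> n" "x \<in> I"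
  shows "(deriv f has_real_derivative deriv (deriv f) x) (at x)"
    "(deriv g has_real_derivative deriv (deriv g) x) (at x)"
  using C_n_on_has_derivative[of n I _ 1 x] assms by (auto simp: Bn_def)

lemma continuous_on_W_1_0:
  assumes "Bn n I f g" "1 \<le> n"
  shows "continuous_on I (W 1 0 f g)"
proof -
  have "continuous_on I (nderiv k f)" "continuous_on I (nderiv k g)" if "k \<le> 1" for k
    using assms that unfolding Bn_def C_n_on_def by auto
  from this[of 0] this[of 1] show ?thesis
    unfolding W_1_0[abs_def] by (intro continuous_intros) simp_all
qed

lemma ratio_has_derivative:
  assumes "(f has_real_derivative f') (at x)" "(g has_real_derivative g') (at x)" "f x \<noteq> 0"
  shows "((\<lambda>t. g t / f t) has_real_derivative - (f' * g x - f x * g') / (f x)^2) (at x)"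
  using DERIV_divide[OF assms(2,1,3)] by (simp add: power2_eq_square algebra_simps)

lemma W_1_0_nonzero:
  assumes "Bn n I f g" "1 \<le> n" "x \<in> I"
  shows "W 1 0 f g x \<noteq> 0"
proof -
  have "f x > 0" "deriv (\<lambda>t. g t / f t) x \<noteq> 0" using assms(1,3) by (auto simp: Bn_def)
  moreover have "deriv (\<lambda>t. g t / f t) x = - W 1 0 f g x / (f x)^2"
    using ratio_has_derivative[OF Bn_has_derivative[OF assms]] \<open>f x > 0\<close>
    by (intro DERIV_imp_deriv) (simp add: W_def)
  ultimately show ?thesis by auto
qed

lemma W_1_0_has_derivative:
  assumes "Bn n I f g" "2 \<le> n" "x \<in> I"
  shows "(W 1 0 f g has_real_derivative W 2 0 f g x) (at x)"
proof -
  have "1 \<le> n" using assms(2) by simp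
  note d1 = Bn_has_derivative[OF assms(1) this assms(3)]
  note d2 = Bn_has_second_derivative[OF assms]
  have "((\<lambda>x. deriv f x * g x - f x * deriv g x) has_real_derivative W 2 0 f g x) (at x)"
    using DERIV_diff[OF DERIV_mult[OF d2(1) d1(2)] DERIV_mult[OF d1(1) d2(2)]]
    by (simp add: W_2_0 algebra_simps)
  then show ?thesis unfolding W_1_0[abs_def] .
qed

text \<open>\<open>(H \<circ> (g/f))' = f\<^sup>2 (g/f)' = -W\<^sup>1\<^sup>,\<^sup>0\<close>, so \<open>h + H \<circ> (g/f)\<close> is constant.\<close>
lemma eq_star_primitive_if_conic:
  assumes "open I" "is_interval I" "I \<noteq> {}" "B0 I f g" "Bn 1 I f g"
    and conic: "\<And>x. x \<in> I \<Longrightarrow> \<alpha> * (f x)^2 + \<beta> * f x * g x + \<gamma> * (g x)^2 = 1"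
    and h: "\<And>x. x \<in> I \<Longrightarrow> (h has_real_derivative W 1 0 f g x) (at x)"
  shows "eq_star I f g h"
proof -
  obtain H where H: "\<And>x. x \<in> I \<Longrightarrow> (H has_real_derivative (f x)^2) (at (g x / f x))"
    and H_mono: "strictly_monotone_on I (\<lambda>x. H (g x / f x))" "continuous_on I (\<lambda>x. H (g x / f x))"
    and mid: "\<And>x y. x \<in> I \<Longrightarrow> y \<in> I \<Longrightarrow> \<exists>z\<in>I. g z / f z = (g x + g y) / (f x + f y)
      \<and> H (g z / f z) = (H (g x / f x) + H (g y / f y)) / 2"
    using conic_primitive_midpoint[OF assms(1-4) conic] by blast
  have f_pos: "\<And>x. x \<in> I \<Longrightarrow> f x > 0" using assms(4) by (simp add: B0_def)
  have deriv0: "((\<lambda>x. h x + H (g x / f x)) has_real_derivative 0) (at x)" if "x \<in> I" for x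
  proof -
    have "((\<lambda>x. H (g x / f x)) has_real_derivative (f x)^2 * (- W 1 0 f g x / (f x)^2)) (at x)"
      using DERIV_chain2[OF H[OF that] ratio_has_derivative[OF Bn_has_derivative[OF assms(5) _ that]]]
        f_pos[OF that] by (simp add: W_def)
    then show ?thesis
      using DERIV_add[OF h[OF that]] f_pos[OF that] by force
  qed
  have h_eq: "h x = h y + H (g y / f y) - H (g x / f x)" if "x \<in> I" "y \<in> I" for x y
    using constant_on_interval_if_deriv_zero[OF assms(2) deriv0 that] by simp
  have "inj_on (\<lambda>x. g x / f x) I"
    using assms(4) strictly_monotone_on_imp_inj_on by (auto simp: B0_def)
  moreover have "inj_on h I"
    using strictly_monotone_on_imp_inj_on[OF H_mono(1)] h_eq unfolding inj_on_def
    by (metis add_left_cancel diff_add_cancel)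
  ultimately show ?thesis
  proof (rule eq_star_intro)
    fix x y assume "x \<in> I" "y \<in> I"
    with mid obtain z where "z \<in> I" "g z / f z = (g x + g y) / (f x + f y)"
      "H (g z / f z) = (H (g x / f x) + H (g y / f y)) / 2" by blast
    then show "\<exists>z\<in>I. g z / f z = (g x + g y) / (f x + f y) \<and> h z = (h x + h y) / 2"
      using h_eq[OF _ \<open>x \<in> I\<close>] h_eq[OF \<open>y \<in> I\<close> \<open>x \<in> I\<close>] by auto
  qed
qed

lemma eq_star_if_eq_star_primitive:
  assumes "open I" "is_interval I" "I \<noteq> {}" "Bn 1 I f g"
    and "\<forall>h. (\<forall>x\<in>I. (h has_real_derivative W 1 0 f g x) (at x)) \<longrightarrow> eq_star I f g h"
  shows "\<exists>h. continuous_on I h \<and> strictly_monotone_on I h \<and> eq_star I f g h"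
proof -
  obtain h where h: "\<And>x. x \<in> I \<Longrightarrow> (h has_real_derivative W 1 0 f g x) (at x)"
    using exists_antiderivative_on_open_interval[OF assms(1-3) continuous_on_W_1_0[OF assms(4)]] by auto
  have "continuous_on I h"
    using h by (intro DERIV_continuous_on[where D="W 1 0 f g"]) (auto intro: has_field_derivative_at_within)
  moreover have "strictly_monotone_on I h"
    using h W_1_0_nonzero[OF assms(4)] continuous_on_W_1_0[OF assms(4)]
    by (intro strictly_monotone_on_if_deriv_nonzero[OF assms(2)]) auto
  ultimately show ?thesis using assms(5) h by blast
qed

text \<open>Differentiating the conic twice along \<open>(f, g)\<close>: the first two equations determine the
  polar coefficients \<open>P\<close>, \<open>R\<close>, and the Gram identity evaluates the quadratic form at \<open>(f', g')\<close>.\<close>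
lemma conic_wronskian_identity:
  fixes f g f1 g1 f2 g2 \<alpha> \<beta> \<gamma> :: real
  assumes W: "f1 * g - f * g1 \<noteq> 0"
    and E0: "\<alpha> * f^2 + \<beta> * f * g + \<gamma> * g^2 = 1"
    and E1: "2 * \<alpha> * f * f1 + \<beta> * (f1 * g + f * g1) + 2 * \<gamma> * g * g1 = 0"
    and E2: "2 * \<alpha> * (f1^2 + f * f2) + \<beta> * (f2 * g + 2 * f1 * g1 + f * g2) + 2 * \<gamma> * (g1^2 + g * g2) = 0"
  shows "f2 * g1 - f1 * g2 = (\<alpha> * \<gamma> - \<beta>^2 / 4) * (f1 * g - f * g1)^3"
proof -
  define w where "w = f1 * g - f * g1"
  define P where "P = \<alpha> * f + \<beta> / 2 * g"
  define R where "R = \<beta> / 2 * f + \<gamma> * g"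
  have w: "w \<noteq> 0" using W by (simp add: w_def)
  define Q1 where "Q1 = \<alpha> * f1^2 + \<beta> * f1 * g1 + \<gamma> * g1^2"
  have e0: "P * f + R * g = 1" using E0 by (simp add: P_def R_def power2_eq_square algebra_simps)
  have e1: "P * f1 + R * g1 = 0" using E1 by (simp add: P_def R_def algebra_simps)
  have "P * w = - g1 * (P * f + R * g) + g * (P * f1 + R * g1)"
    by (simp add: w_def algebra_simps)
  then have P: "P = - g1 / w" using e0 e1 w by (simp add: field_simps)
  have "R * w = f1 * (P * f + R * g) - f * (P * f1 + R * g1)"
    by (simp add: w_def algebra_simps)
  then have R: "R = f1 / w" using e0 e1 w by (simp add: field_simps)
  have "(P * f + R * g) * Q1 - (P * f1 + R * g1)^2 = (\<alpha> * \<gamma> - \<beta>^2 / 4) * w^2"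
    by (simp add: P_def R_def Q1_def w_def power2_eq_square algebra_simps)
  then have Q1: "Q1 = (\<alpha> * \<gamma> - \<beta>^2 / 4) * w^2" using e0 e1 by simp
  have "Q1 + (P * f2 + R * g2) = 0"
    using E2 by (simp add: P_def R_def Q1_def power2_eq_square algebra_simps)
  moreover have "P * f2 + R * g2 = - ((f2 * g1 - f1 * g2) / w)"
    unfolding P R using w by (simp add: field_simps)
  ultimately have "f2 * g1 - f1 * g2 = Q1 * w" using w by (simp add: field_simps)
  then show ?thesis unfolding Q1 by (simp add: w_def power3_eq_cube power2_eq_square)
qed

lemma wronskian_cubic_if_conic:
  assumes "open I" "Bn 2 I f g"
    and conic: "\<And>x. x \<in> I \<Longrightarrow> \<alpha> * (f x)^2 + \<beta> * f x * g x + \<gamma> * (g x)^2 = 1"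
    and "x \<in> I"
  shows "W 2 1 f g x = (\<alpha> * \<gamma> - \<beta>^2 / 4) * (W 1 0 f g x)^3"
proof -
  note df = Bn_has_derivative[OF assms(2)] and d2f = Bn_has_second_derivative[OF assms(2)]
  define E1 where "E1 t = 2 * \<alpha> * f t * deriv f t + \<beta> * (deriv f t * g t + f t * deriv g t)
    + 2 * \<gamma> * g t * deriv g t" for t
  have E1_zero: "E1 t = 0" if "t \<in> I" for t
  proof (rule deriv_zero_if_constant_on_open[OF assms(1) that _ conic])
    show "((\<lambda>x. \<alpha> * (f x)^2 + \<beta> * f x * g x + \<gamma> * (g x)^2) has_real_derivative E1 t) (at t)"
      using df[OF _ that] by (auto intro!: derivative_eq_intros simp: E1_def algebra_simps)
  qed
  define E2 where "E2 = 2 * \<alpha> * ((deriv f x)^2 + f x * deriv (deriv f) x)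
    + \<beta> * (deriv (deriv f) x * g x + 2 * deriv f x * deriv g x + f x * deriv (deriv g) x)
    + 2 * \<gamma> * ((deriv g x)^2 + g x * deriv (deriv g) x)"
  have "E2 = 0"
  proof (rule deriv_zero_if_constant_on_open[OF assms(1,4) _ E1_zero])
    show "(E1 has_real_derivative E2) (at x)"
      unfolding E1_def[abs_def] using df[OF _ assms(4)] d2f[OF _ assms(4)]
      by (auto intro!: derivative_eq_intros simp: E2_def power2_eq_square algebra_simps)
  qed
  moreover have "deriv f x * g x - f x * deriv g x \<noteq> 0"
    using W_1_0_nonzero[OF assms(2) _ assms(4)] unfolding W_1_0 by simp
  ultimately show ?thesis
    using conic_wronskian_identity[OF _ conic[OF assms(4)]] E1_zero[OF assms(4)]
    unfolding W_1_0 W_2_1 E1_def E2_def by blast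
qed

lemma wronskian_cubic_first_integral:
  assumes "is_interval I" "Bn 2 I f g"
    and cubic: "\<And>x. x \<in> I \<Longrightarrow> W 2 1 f g x = \<delta> * (W 1 0 f g x)^3"
    and "t \<in> I" "s \<in> I"
  shows "\<delta> * (u * g t - v * f t)^2 + ((deriv f t * v - deriv g t * u) / W 1 0 f g t)^2
    = \<delta> * (u * g s - v * f s)^2 + ((deriv f s * v - deriv g s * u) / W 1 0 f g s)^2"
proof -
  note df = Bn_has_derivative[OF assms(2)] and d2f = Bn_has_second_derivative[OF assms(2)]
  note W_nz = W_1_0_nonzero[OF assms(2)]
  define a where "a t = u * g t - v * f t" for t
  define b where "b t = (deriv f t * v - deriv g t * u) / W 1 0 f g t" for t
  have "((\<lambda>t. \<delta> * (a t)^2 + (b t)^2) has_real_derivative 0) (at x)" if x: "x \<in> I" for x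
  proof -
    have "(a has_real_derivative u * deriv g x - v * deriv f x) (at x)"
      unfolding a_def[abs_def] using df[OF _ x] by (auto intro!: derivative_eq_intros)
    moreover have "u * deriv g x - v * deriv f x = - b x * W 1 0 f g x"
      using W_nz[OF _ x] by (simp add: b_def)
    ultimately have da: "(a has_real_derivative - b x * W 1 0 f g x) (at x)"
      by simp
    have "((\<lambda>t. deriv f t * v - deriv g t * u) has_real_derivative
        deriv (deriv f) x * v - deriv (deriv g) x * u) (at x)"
      using d2f[OF _ x] by (auto intro!: derivative_eq_intros)
    from DERIV_divide[OF this W_1_0_has_derivative[OF assms(2) _ x] W_nz[OF _ x]]
    have "(b has_real_derivative ((deriv (deriv f) x * v - deriv (deriv g) x * u) * W 1 0 f g x
        - (deriv f x * v - deriv g x * u) * W 2 0 f g x) / (W 1 0 f g x * W 1 0 f g x)) (at x)"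
      unfolding b_def[abs_def] by simp
    moreover have "(deriv (deriv f) x * v - deriv (deriv g) x * u) * W 1 0 f g x
        - (deriv f x * v - deriv g x * u) * W 2 0 f g x = W 2 1 f g x * a x"
      unfolding a_def W_1_0 W_2_0 W_2_1 by (simp add: algebra_simps)
    ultimately have db: "(b has_real_derivative \<delta> * W 1 0 f g x * a x) (at x)"
      using cubic[OF x] W_nz[OF _ x] by (simp add: power3_eq_cube mult.assoc)
    show ?thesis
      using DERIV_add[OF DERIV_cmult[OF DERIV_power[OF da, of 2]] DERIV_power[OF db, of 2], of \<delta>]
      by (simp add: algebra_simps)
  qed
  from constant_on_interval_if_deriv_zero[OF assms(1) this assms(4,5)]
  show ?thesis by (simp add: a_def b_def)
qed

text \<open>At \<open>t = y\<close> and \<open>(u, v) = (f y, g y)\<close> the first integral equals \<open>1\<close>; at a fixed base point it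
  is a quadratic form in \<open>(u, v)\<close>.\<close>
lemma conic_if_wronskian_cubic:
  assumes "open I" "is_interval I" "I \<noteq> {}" "Bn 2 I f g"
    and cubic: "\<And>x. x \<in> I \<Longrightarrow> W 2 1 f g x = \<delta> * (W 1 0 f g x)^3"
  shows "\<exists>\<alpha> \<beta> \<gamma>. \<forall>x\<in>I. \<alpha> * (f x)^2 + \<beta> * f x * g x + \<gamma> * (g x)^2 = 1"
proof -
  obtain x0 where x0: "x0 \<in> I" using assms(3) by blast
  define w0 where "w0 = W 1 0 f g x0"
  have "w0 \<noteq> 0" using W_1_0_nonzero[OF assms(4) _ x0] by (simp add: w0_def)
  have "(\<delta> * (g x0)^2 + (deriv g x0 / w0)^2) * (f y)^2
      + (- 2 * \<delta> * f x0 * g x0 - 2 * deriv f x0 * deriv g x0 / w0^2) * f y * g y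
      + (\<delta> * (f x0)^2 + (deriv f x0 / w0)^2) * (g y)^2 = 1" if "y \<in> I" for y
  proof -
    have "deriv f y * g y - deriv g y * f y = W 1 0 f g y" unfolding W_1_0 by simp
    then have "(deriv f y * g y - deriv g y * f y) / W 1 0 f g y = 1"
      using W_1_0_nonzero[OF assms(4) _ that] by simp
    then have "\<delta> * (f y * g x0 - g y * f x0)^2 + ((deriv f x0 * g y - deriv g x0 * f y) / w0)^2 = 1"
      using wronskian_cubic_first_integral[OF assms(2,4) cubic that x0, of "f y" "g y"]
      by (simp add: w0_def)
    moreover have "\<delta> * (f y * g x0 - g y * f x0)^2 + ((deriv f x0 * g y - deriv g x0 * f y) / w0)^2
      = (\<delta> * (g x0)^2 + (deriv g x0 / w0)^2) * (f y)^2
      + (- 2 * \<delta> * f x0 * g x0 - 2 * deriv f x0 * deriv g x0 / w0^2) * f y * g y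
      + (\<delta> * (f x0)^2 + (deriv f x0 / w0)^2) * (g y)^2"
      using \<open>w0 \<noteq> 0\<close> by (simp add: power2_eq_square field_simps)
    ultimately show ?thesis by simp
  qed
  then show ?thesis by blast
qed

lemma Psi_equation_if_wronskian_cubic:
  assumes "open I" "Bn 2 I f g"
    and cubic: "\<And>x. x \<in> I \<Longrightarrow> W 2 1 f g x = \<delta> * (W 1 0 f g x)^3" and "x \<in> I"
  shows "(Psi f g has_real_derivative 2 * Phi f g x * Psi f g x) (at x)"
proof -
  have Psi_eq: "Psi f g t = - \<delta> * (W 1 0 f g t)^2" if "t \<in> I" for t
    using cubic[OF that] W_1_0_nonzero[OF assms(2) _ that] by (simp add: Psi_def power3_eq_cube power2_eq_square)
  have "((\<lambda>t. - \<delta> * (W 1 0 f g t)^2) has_real_derivative - \<delta> * (2 * W 1 0 f g x * W 2 0 f g x)) (at x)"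
    using W_1_0_has_derivative[OF assms(2) _ assms(4)] by (auto intro!: derivative_eq_intros)
  then have "(Psi f g has_real_derivative - \<delta> * (2 * W 1 0 f g x * W 2 0 f g x)) (at x)"
    by (rule has_field_derivative_transform_within_open[OF _ assms(1,4)]) (simp add: Psi_eq)
  moreover have "- \<delta> * (2 * W 1 0 f g x * W 2 0 f g x) = 2 * Phi f g x * Psi f g x"
    using Psi_eq[OF assms(4)] W_1_0_nonzero[OF assms(2) _ assms(4)] by (simp add: Phi_def power2_eq_square)
  ultimately show ?thesis by metis
qed

lemma wronskian_cubic_if_Psi_equation:
  assumes "open I" "is_interval I" "I \<noteq> {}" "Bn 2 I f g"
    and Psi: "\<And>x. x \<in> I \<Longrightarrow> (Psi f g has_real_derivative 2 * Phi f g x * Psi f g x) (at x)"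
  shows "\<exists>\<delta>. \<forall>x\<in>I. W 2 1 f g x = \<delta> * (W 1 0 f g x)^3"
proof -
  note W_nz = W_1_0_nonzero[OF assms(4)]
  have deriv0: "((\<lambda>t. Psi f g t / (W 1 0 f g t)^2) has_real_derivative 0) (at x)" if "x \<in> I" for x
    using DERIV_divide[OF Psi[OF that] DERIV_power[OF W_1_0_has_derivative[OF assms(4) _ that], of 2]]
      W_nz[OF _ that] by (simp add: Phi_def field_simps power2_eq_square)
  obtain x0 where "x0 \<in> I" using assms(3) by blast
  define c where "c = Psi f g x0 / (W 1 0 f g x0)^2"
  have "W 2 1 f g x = - c * (W 1 0 f g x)^3" if "x \<in> I" for x
  proof -
    have "Psi f g x = c * (W 1 0 f g x)^2"
      using constant_on_interval_if_deriv_zero[OF assms(2) deriv0 that \<open>x0 \<in> I\<close>] W_nz[OF _ that]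
      by (simp add: c_def field_simps)
    then show ?thesis
      using W_nz[OF _ that] by (simp add: Psi_def power3_eq_cube power2_eq_square field_simps)
  qed
  then show ?thesis by blast
qed

theorem theorem3p3:
  fixes I :: "real set" and f g :: "real \<Rightarrow> real"
  assumes "open I" and "is_interval I" and "I \<noteq> {}"
    and "B0 I f g"
  defines "S1 \<equiv> (\<exists>h. continuous_on I h \<and> strictly_monotone_on I h \<and> eq_star I f g h)"
    and "S2 \<equiv> (\<exists>\<alpha> \<beta> \<gamma>::real. \<forall>x\<in>I. \<alpha> * (f x)^2 + \<beta> * f x * g x + \<gamma> * (g x)^2 = 1)"
    and "S3 \<equiv> (\<forall>h. (\<forall>x\<in>I. (h has_real_derivative W 1 0 f g x) (at x)) \<longrightarrow> eq_star I f g h)"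
    and "S4 \<equiv> (\<exists>\<delta>::real. \<forall>x\<in>I. W 2 1 f g x = \<delta> * (W 1 0 f g x)^3)"
    and "S5 \<equiv> (\<forall>x\<in>I. (Psi f g has_real_derivative 2 * Phi f g x * Psi f g x) (at x))"
  shows "(S1 \<longleftrightarrow> S2)
    \<and> (Bn 1 I f g \<longrightarrow> (S1 \<longleftrightarrow> S2) \<and> (S2 \<longleftrightarrow> S3))
    \<and> (Bn 2 I f g \<longrightarrow> (S1 \<longleftrightarrow> S2) \<and> (S2 \<longleftrightarrow> S3) \<and> (S3 \<longleftrightarrow> S4) \<and> (S4 \<longleftrightarrow> S5))"
proof -
  have Bn1: "Bn 1 I f g" if "Bn 2 I f g" using Bn_mono[OF that] by simp
  have "S1 \<Longrightarrow> S2" unfolding S1_def S2_def using conic_if_eq_star[OF assms(1-4)] by blast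
  moreover have "S2 \<Longrightarrow> S1" unfolding S1_def S2_def using eq_star_if_conic[OF assms(1-4)] by blast
  moreover have "S2 \<Longrightarrow> S3" if "Bn 1 I f g"
    unfolding S2_def S3_def using eq_star_primitive_if_conic[OF assms(1-4) that] by blast
  moreover have "S3 \<Longrightarrow> S1" if "Bn 1 I f g"
    unfolding S1_def S3_def using eq_star_if_eq_star_primitive[OF assms(1-3) that] by blast
  moreover have "S2 \<Longrightarrow> S4" if "Bn 2 I f g"
    unfolding S2_def S4_def using wronskian_cubic_if_conic[OF assms(1) that] by blast
  moreover have "S4 \<Longrightarrow> S2" if "Bn 2 I f g"
    unfolding S2_def S4_def using conic_if_wronskian_cubic[OF assms(1-3) that] by blast
  moreover have "S4 \<Longrightarrow> S5" if "Bn 2 I f g"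
    unfolding S4_def S5_def using Psi_equation_if_wronskian_cubic[OF assms(1) that] by blast
  moreover have "S5 \<Longrightarrow> S4" if "Bn 2 I f g"
    unfolding S4_def S5_def using wronskian_cubic_if_Psi_equation[OF assms(1-3) that] by blast
  ultimately show ?thesis using Bn1 by blast
qed

end
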